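(* Let $q$ be an odd prime power, let $\omega$ be a non-square in $\mathbb F_q$ and $\epsilon\in\mathbb F_{q^2}$ with $\epsilon^2=\omega$; write $z=z_1+\epsilon z_2$ ($z_1,z_2\in\mathbb F_q$) for $z\in\mathbb F_{q^2}$. Let $\mathcal C: aX^2+bXY+cXZ+YZ+eZ^2=0$ be a non-singular conic of $\mathrm{PG}(2,q^2)$ with $a,b,c,e\in\mathbb F_{q^2}$ and $b\notin\mathbb F_q$ (i.e. $b_2\ne0$). Put $A=-a_2b_1+a_1b_2$, $B=b_2c_1-b_1c_2+a_1\cdot 0-a_2$, $C=c_1\cdot 0-c_2+b_2e_1-b_1e_2$, $D=-e_2$ (the general formulas $A=-a_2b_1+a_1b_2$, $B=b_2c_1-b_1c_2-a_2d_1+a_1d_2$, $C=-c_2d_1+c_1d_2+b_2e_1-b_1e_2$, $D=d_2e_1-d_1e_2$ with $d=1$, i.e. $d_1=1,d_2=0$), and let $\mathcal S$ be the (irreducible) cubic surface of $\mathrm{PG}(3,q)$ in coordinates $(t_1:t_2:X:Z)$ given by $$2t_1t_2(b_1X+d_1Z)-(t_1^2+\omega t_2^2)(b_2X+d_2Z)+AX^3+BX^2Z+CXZ^2+DZ^3=0$$ (with $d_1=1,d_2=0$). Then $\mathcal S$ has at most one singular point; if $P$ is a singular point of $\mathcal S$, then $P$ is a double point and $P$ is defined over $\mathbb F_q$.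
   Context: Singular points are considered over the algebraic closure of $\mathbb F_q$. The normalization $d=1$ and the irreducibility condition $b_1d_2-b_2d_1\ne0$ are the standing assumptions of the section in which the result is stated. *)

theory Defs
  imports "HOL-Algebra.Algebraic_Closure_Type" "HOL-Library.Numeral_Type"
begin

definition point_mult_ge :: "(('n \<Rightarrow> 'b::field) \<Rightarrow> 'b) \<Rightarrow> ('n \<Rightarrow> 'b) \<Rightarrow> nat \<Rightarrow> bool" where
  "point_mult_ge F P m \<longleftrightarrow>
     (\<forall>v. \<exists>p. (\<forall>t. poly p t = F (\<lambda>i. P i + t * v i)) \<and> [:0, 1:] ^ m dvd p)"

definition singular_point :: "(('n \<Rightarrow> 'b::field) \<Rightarrow> 'b) \<Rightarrow> ('n \<Rightarrow> 'b) \<Rightarrow> bool" where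
  "singular_point F P \<longleftrightarrow> P \<noteq> (\<lambda>_. 0) \<and> point_mult_ge F P 2"

definition double_point :: "(('n \<Rightarrow> 'b::field) \<Rightarrow> 'b) \<Rightarrow> ('n \<Rightarrow> 'b) \<Rightarrow> bool" where
  "double_point F P \<longleftrightarrow> P \<noteq> (\<lambda>_. 0) \<and> point_mult_ge F P 2 \<and> \<not> point_mult_ge F P 3"

definition proj_eq :: "('n \<Rightarrow> 'b::field) \<Rightarrow> ('n \<Rightarrow> 'b) \<Rightarrow> bool" where
  "proj_eq P Q \<longleftrightarrow> (\<exists>c. c \<noteq> 0 \<and> Q = (\<lambda>i. c * P i))"

text \<open>Conic a X^2 + b X Y + c X Z + Y Z + e Z^2 in coordinates (X:Y:Z) = (x 1 : x 2 : x 3).\<close>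
definition conicF :: "'b::field \<Rightarrow> 'b \<Rightarrow> 'b \<Rightarrow> 'b \<Rightarrow> (3 \<Rightarrow> 'b) \<Rightarrow> 'b" where
  "conicF a b c e x = a * x 1 ^ 2 + b * x 1 * x 2 + c * x 1 * x 3 + x 2 * x 3 + e * x 3 ^ 2"

text \<open>Cubic surface in coordinates (t1:t2:X:Z) = (x 1 : x 2 : x 3 : x 4), with d1 = 1, d2 = 0:
  2 t1 t2 (b1 X + d1 Z) - (t1^2 + w t2^2)(b2 X + d2 Z) + A X^3 + B X^2 Z + C X Z^2 + D Z^3.\<close>
definition surfaceF :: "'b::field \<Rightarrow> 'b \<Rightarrow> 'b \<Rightarrow> 'b \<Rightarrow> 'b \<Rightarrow> 'b \<Rightarrow> 'b \<Rightarrow> (4 \<Rightarrow> 'b) \<Rightarrow> 'b" where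
  "surfaceF w b1 b2 A B C D x =
     2 * x 1 * x 2 * (b1 * x 3 + 1 * x 4) - (x 1 ^ 2 + w * x 2 ^ 2) * (b2 * x 3 + 0 * x 4)
     + A * x 3 ^ 3 + B * x 3 ^ 2 * x 4 + C * x 3 * x 4 ^ 2 + D * x 4 ^ 3"

end

(* Write L = b1 X + Z and let g(X, Z) = A X^3 + B X^2 Z + C X Z^2 + D Z^3 be the cubic part of S.
   At a singular point the t1- and t2-derivatives give t2 L = b2 t1 X and t1 L = omega b2 t2 X, so
   either t1 = t2 = 0 or L = delta b2 X with delta^2 = omega.  In the second case the point lies on
   Z = (delta b2 - b1) X, where g(1, delta b2 - b1) is b2 times the value at -delta of
   Delta(eps) = a + e b^2 - b c.  Since Delta(eps) = x0 + eps y0 with x0, y0 in F_q and omega is a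
   non-square, Delta vanishes at one square root of omega only if it vanishes at both, and
   Delta(eps) = 0 would make the conic singular.  So every singular point has t1 = t2 = 0 and
   (X : Z) is a multiple root of g.
   Outside characteristic 2 a nonzero binary cubic has at most one multiple root, and it is
   F_q-rational: it is a rational function of the coefficients, except in characteristic 3, where it
   is a cube root in F_q because cubing is a bijection of F_q. *)

theory Submission
  imports Defs "HOL-Number_Theory.Residues" "HOL-Analysis.Cartesian_Space"
begin

lemma odd_card_imp_two_neq_zero:
  assumes "odd CARD('a::{field,finite})"
  shows "(2::'a) \<noteq> 0"
proof
  assume "(2::'a) = 0"
  then have "of_nat 2 = (0::'a)"
    by simp
  then have "CHAR('a) dvd 2"
    by (simp only: of_nat_eq_0_iff_char_dvd)
  moreover have "prime CHAR('a)"
    by (intro prime_CHAR_semidom finite_imp_CHAR_pos) simp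
  ultimately have "CHAR('a) = 2"
    using primes_dvd_imp_eq two_is_prime_nat by blast
  with CHAR_dvd_CARD[where 'a = 'a] assms show False
    by simp
qed

lemma infinite_UNIV_alg_closed_field: "infinite (UNIV :: 'a::alg_closed_field set)"
proof
  assume fin: "finite (UNIV :: 'a set)"
  define q :: "'a poly" where "q = (\<Prod>a\<in>UNIV. [:-a, 1:])"
  have "degree (q + 1) > 0"
    using fin by (simp add: q_def degree_prod_eq_sum_degree finite_UNIV_card_ge_0 degree_add_eq_left)
  then obtain x where "poly (q + 1) x = 0"
    using alg_closed_imp_poly_has_root by blast
  moreover have "poly q x = 0"
    using fin by (simp add: q_def poly_prod)
  ultimately show False
    by simp
qed

lemma poly_eqI_infinite:
  fixes p q :: "'b::idom poly"
  assumes "infinite (UNIV :: 'b set)" and "\<And>t. poly p t = poly q t"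
  shows "p = q"
proof (rule ccontr)
  assume "p \<noteq> q"
  then have "finite {t. poly (p - q) t = 0}"
    by (intro poly_roots_finite) simp
  with assms show False
    by simp
qed

lemma point_mult_ge_coeff_eq_0:
  fixes F :: "('n \<Rightarrow> 'b::field) \<Rightarrow> 'b"
  assumes "infinite (UNIV :: 'b set)" and "point_mult_ge F P m"
    and "\<And>t. F (\<lambda>i. P i + t * v i) = poly q t" and "k < m"
  shows "coeff q k = 0"
proof -
  obtain p where p: "\<forall>t. poly p t = F (\<lambda>i. P i + t * v i)" and dvd: "[:0, 1:] ^ m dvd p"
    using assms(2) unfolding point_mult_ge_def by blast
  have "p = q"
    using assms(1) by (rule poly_eqI_infinite) (simp add: p assms(3))
  with dvd have "monom 1 m dvd q"
    by (simp add: monom_altdef)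
  with assms(4) show ?thesis
    using monom_1_dvd_iff' by blast
qed

(* a + e b^2 - b c is -4 times the determinant of the symmetric matrix of the conic. *)
lemma conicF_singular_point:
  fixes a b c e :: "'b::field"
  assumes "a + e * b^2 - b * c = 0"
  shows "singular_point (conicF a b c e) (\<lambda>i. if i = 1 then 1 else if i = 2 then 2*e*b - c else -b)"
    (is "singular_point ?F ?P")
proof -
  have a: "a = b*c - e*b^2"
    using assms by (simp add: algebra_simps)
  have "?F (\<lambda>i. ?P i + t * v i) = poly [:0, 0, ?F v:] t" for v t
    by (simp add: conicF_def a algebra_simps power2_eq_square)
  moreover have "[:0, 1:] ^ 2 dvd [:0, 0, w:]" for w :: 'b
    by (rule dvdI[of _ _ "[:w:]"]) (simp add: power2_eq_square)
  ultimately have "point_mult_ge ?F ?P 2"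
    unfolding point_mult_ge_def by metis
  moreover have "?P \<noteq> (\<lambda>_. 0)"
    by (metis one_neq_zero)
  ultimately show ?thesis
    unfolding singular_point_def by blast
qed

definition binary_cubic :: "'b::comm_ring_1 \<Rightarrow> 'b \<Rightarrow> 'b \<Rightarrow> 'b \<Rightarrow> 'b \<Rightarrow> 'b \<Rightarrow> 'b" where
  "binary_cubic A B C D u z = A*u^3 + B*u^2*z + C*u*z^2 + D*z^3"

(* The cubic itself is required to vanish because in characteristic 3 Euler's identity
   3 g = u g_u + z g_z does not recover it from the partial derivatives. *)
definition cubic_multiple_root :: "'b::comm_ring_1 \<Rightarrow> 'b \<Rightarrow> 'b \<Rightarrow> 'b \<Rightarrow> 'b \<Rightarrow> 'b \<Rightarrow> bool" where
  "cubic_multiple_root A B C D u z \<longleftrightarrow> (u \<noteq> 0 \<or> z \<noteq> 0) \<and> binary_cubic A B C D u z = 0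
     \<and> 3*A*u^2 + 2*B*u*z + C*z^2 = 0 \<and> B*u^2 + 2*C*u*z + 3*D*z^2 = 0"

lemma cubic_multiple_root_at_infinity:
  fixes A B C D z :: "'b::idom"
  assumes "cubic_multiple_root A B C D 0 z"
  shows "C = 0 \<and> D = 0"
  using assms by (auto simp: cubic_multiple_root_def binary_cubic_def)

lemma cubic_multiple_root_coeffs:
  fixes A B C D u z :: "'b::field"
  assumes "cubic_multiple_root A B C D u z" and "u \<noteq> 0"
  defines "r \<equiv> z / u"
  shows "B = -2*C*r - 3*D*r^2" and "A = C*r^2 + 2*D*r^3"
proof -
  have z: "z = r*u"
    using assms(2) by (simp add: r_def)
  have "u^2 * (B + 2*C*r + 3*D*r^2) = 0"
    using assms(1) unfolding cubic_multiple_root_def z by (simp add: algebra_simps power2_eq_square)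
  then have "B + 2*C*r + 3*D*r^2 = 0"
    using assms(2) by simp
  then show B: "B = -2*C*r - 3*D*r^2"
    by (simp add: add_eq_0_iff2 algebra_simps)
  have "u^3 * (A + B*r + C*r^2 + D*r^3) = 0"
    using assms(1) unfolding cubic_multiple_root_def binary_cubic_def z
    by (simp add: algebra_simps power2_eq_square power3_eq_cube)
  then have "A + B*r + C*r^2 + D*r^3 = 0"
    using assms(2) by simp
  then show "A = C*r^2 + 2*D*r^3"
    unfolding B by (simp add: algebra_simps power2_eq_square power3_eq_cube)
qed

lemma cubic_two_double_roots_degenerate:
  fixes A B C D r r' :: "'b::field"
  assumes "(2::'b) \<noteq> 0" and "r \<noteq> r'"
    and "B = -2*C*r - 3*D*r^2" and "A = C*r^2 + 2*D*r^3"
    and "B = -2*C*r' - 3*D*r'^2" and "A = C*r'^2 + 2*D*r'^3"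
  shows "C = 0 \<and> D = 0"
proof -
  have "(r' - r) * (2*C + 3*D*(r + r')) = 0"
    using assms(3,5) by (simp add: algebra_simps power2_eq_square)
  then have B_diff: "2*C + 3*D*(r + r') = 0"
    using assms(2) by simp
  have "(r' - r) * (C*(r + r') + 2*D*(r^2 + r*r' + r'^2)) = 0"
    using assms(4,6) by (simp add: algebra_simps power2_eq_square power3_eq_cube)
  then have A_diff: "C*(r + r') + 2*D*(r^2 + r*r' + r'^2) = 0"
    using assms(2) by simp
  have "D*(r - r')^2 = 2*(C*(r + r') + 2*D*(r^2 + r*r' + r'^2)) - (r + r')*(2*C + 3*D*(r + r'))"
    by (simp add: algebra_simps power2_eq_square)
  then have "D = 0"
    using B_diff A_diff assms(2) by simp
  with B_diff assms(1) show ?thesis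
    by simp
qed

lemma cubic_multiple_root_unique:
  fixes A B C D u z u' z' :: "'b::field"
  assumes "(2::'b) \<noteq> 0" and "\<not> (A = 0 \<and> B = 0 \<and> C = 0 \<and> D = 0)"
    and root: "cubic_multiple_root A B C D u z" and root': "cubic_multiple_root A B C D u' z'"
  shows "\<exists>c. c \<noteq> 0 \<and> u' = c*u \<and> z' = c*z"
proof -
  have CD: "\<not> (C = 0 \<and> D = 0)" if "cubic_multiple_root A B C D v y" "v \<noteq> 0" for v y
    using cubic_multiple_root_coeffs[OF that] assms(2) by auto
  consider "u = 0" "u' = 0" | "u \<noteq> 0" "u' \<noteq> 0" | "(u = 0) \<noteq> (u' = 0)"
    by blast
  then show ?thesis
  proof cases
    case 1
    with root root' have "z \<noteq> 0" "z' \<noteq> 0"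
      by (simp_all add: cubic_multiple_root_def)
    with 1 show ?thesis
      by (intro exI[of _ "z'/z"]) simp
  next
    case 2
    have "z/u = z'/u'"
      using cubic_two_double_roots_degenerate[OF assms(1) _ cubic_multiple_root_coeffs[OF root 2(1)]
          cubic_multiple_root_coeffs[OF root' 2(2)]] CD[OF root 2(1)] by blast
    then have "z' = u'/u * z"
      using 2 by (simp add: field_simps)
    with 2 show ?thesis
      by (intro exI[of _ "u'/u"]) simp
  next
    case 3
    then show ?thesis
      using CD[OF root] CD[OF root'] root root'
        cubic_multiple_root_at_infinity[of A B C D z] cubic_multiple_root_at_infinity[of A B C D z']
      by auto
  qed
qed

lemma cube_eq_cube_char_3:
  fixes x y :: "'b::idom"
  assumes "(3::'b) = 0" and "x^3 = y^3"
  shows "x = y"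
proof -
  have "(x - y)^3 = x^3 - y^3 - 3*(x^2*y - x*y^2)"
    by (simp add: algebra_simps power2_eq_square power3_eq_cube)
  also have "\<dots> = 0"
    using assms by simp
  finally show ?thesis
    by simp
qed

lemma numeral_alg_closure_eq_0_iff [simp]:
  "(numeral n :: 'a::field alg_closure) = 0 \<longleftrightarrow> (numeral n :: 'a) = 0"
  using to_ac_eq_0_iff[of "numeral n :: 'a"] by simp

lemma cube_root_in_range_to_ac:
  fixes y :: "'a::{field,finite}" and r :: "'a alg_closure"
  assumes "(3::'a) = 0" and "r^3 = to_ac y"
  shows "r \<in> range to_ac"
proof -
  have "inj (\<lambda>x::'a. x^3)"
    using cube_eq_cube_char_3[OF assms(1)] by (rule injI)
  then have "surj (\<lambda>x::'a. x^3)"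
    by (simp add: finite_UNIV_inj_surj)
  then obtain s where "y = s^3"
    by (rule surjE)
  with assms(2) have "r^3 = to_ac s ^ 3"
    by simp
  moreover have "(3::'a alg_closure) = 0"
    using assms(1) by simp
  ultimately have "r = to_ac s"
    using cube_eq_cube_char_3 by blast
  then show ?thesis
    by (rule range_eqI)
qed

lemma cubic_double_root_in_range_to_ac:
  fixes A B C D :: "'a::{field,finite}" and r :: "'a alg_closure"
  assumes two: "(2::'a) \<noteq> 0" and nz: "\<not> (A = 0 \<and> B = 0 \<and> C = 0 \<and> D = 0)"
    and B: "to_ac B = -2*to_ac C*r - 3*to_ac D*r^2" and A: "to_ac A = to_ac C*r^2 + 2*to_ac D*r^3"
  shows "r \<in> range to_ac"
proof (cases "C^2 = 3*B*D")
  case False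
  with two have den_nz: "2*(3*B*D - C^2) \<noteq> 0"
    unfolding mult_eq_0_iff right_minus_eq by auto
  have "r * to_ac (2*(3*B*D - C^2)) = to_ac (B*C - 9*A*D)"
    by (simp add: A B algebra_simps power2_eq_square power3_eq_cube)
  with den_nz have "r = to_ac ((B*C - 9*A*D) / (2*(3*B*D - C^2)))"
    by (simp add: eq_divide_eq del: to_ac_mult to_ac_diff)
  then show ?thesis
    by (rule range_eqI)
next
  case True
  have "(to_ac C + 3*to_ac D*r)^2
      = to_ac (C^2 - 3*B*D) + 3*to_ac D*(to_ac B + 2*to_ac C*r + 3*to_ac D*r^2)"
    by (simp add: algebra_simps power2_eq_square)
  also have "\<dots> = 0"
    by (simp add: True B)
  finally have C: "to_ac C = -3*to_ac D*r"
    by (simp add: eq_neg_iff_add_eq_0)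
  show ?thesis
  proof (cases "3*D = 0")
    case False
    with C have "r = to_ac (-C / (3*D))"
      by (simp add: field_simps)
    then show ?thesis
      by (rule range_eqI)
  next
    case True
    then have "3 * to_ac D = 0"
      by (simp flip: to_ac_numeral to_ac_mult)
    with C have "C = 0"
      by simp
    with nz A B have "D \<noteq> 0"
      by auto
    with True have "(3::'a) = 0"
      by simp
    have "r^3 = to_ac (A / (2*D))"
      using A \<open>C = 0\<close> \<open>D \<noteq> 0\<close> two by (simp add: field_simps)
    with \<open>(3::'a) = 0\<close> show ?thesis
      by (rule cube_root_in_range_to_ac)
  qed
qed

lemma cubic_multiple_root_rational:
  fixes A B C D :: "'a::{field,finite}" and u z :: "'a alg_closure"
  assumes "(2::'a) \<noteq> 0" and "\<not> (A = 0 \<and> B = 0 \<and> C = 0 \<and> D = 0)"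
    and root: "cubic_multiple_root (to_ac A) (to_ac B) (to_ac C) (to_ac D) u z"
  shows "\<exists>c s1 s2. u = c * to_ac s1 \<and> z = c * to_ac s2"
proof (cases "u = 0")
  case True
  then show ?thesis
    by (intro exI[of _ z] exI[of _ 0] exI[of _ 1]) simp
next
  case False
  from cubic_double_root_in_range_to_ac[OF assms(1,2) cubic_multiple_root_coeffs[OF root False]]
  obtain s where "z / u = to_ac s"
    by (rule rangeE)
  with False have "z = u * to_ac s"
    by (simp add: divide_eq_eq)
  then show ?thesis
    by (intro exI[of _ u] exI[of _ 1] exI[of _ s]) simp
qed

lemma surfaceF_along_line:
  fixes w b1 b2 A B C D t :: "'b::field" and x y :: "4 \<Rightarrow> 'b"
  shows "surfaceF w b1 b2 A B C D (\<lambda>i. x i + t * y i) = poly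
    [: surfaceF w b1 b2 A B C D x,
       2*((x 1*y 2 + y 1*x 2)*(b1*x 3 + x 4) + x 1*x 2*(b1*y 3 + y 4))
         - b2*((2*x 1*y 1 + 2*w*x 2*y 2)*x 3 + (x 1^2 + w*x 2^2)*y 3)
         + 3*A*x 3^2*y 3 + B*(2*x 3*y 3*x 4 + x 3^2*y 4) + C*(y 3*x 4^2 + 2*x 3*x 4*y 4) + 3*D*x 4^2*y 4,
       2*(y 1*y 2*(b1*x 3 + x 4) + (x 1*y 2 + y 1*x 2)*(b1*y 3 + y 4))
         - b2*((y 1^2 + w*y 2^2)*x 3 + (2*x 1*y 1 + 2*w*x 2*y 2)*y 3)
         + 3*A*x 3*y 3^2 + B*(y 3^2*x 4 + 2*x 3*y 3*y 4) + C*(x 3*y 4^2 + 2*y 3*x 4*y 4) + 3*D*x 4*y 4^2,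
       surfaceF w b1 b2 A B C D y :] t"
  unfolding surfaceF_def by (simp add: algebra_simps power2_eq_square power3_eq_cube)

lemma surfaceF_singular_gradient:
  fixes w b1 b2 A B C D :: "'b::field" and x :: "4 \<Rightarrow> 'b"
  assumes "infinite (UNIV :: 'b set)" and "point_mult_ge (surfaceF w b1 b2 A B C D) x 2"
  shows "surfaceF w b1 b2 A B C D x = 0"
    and "2*x 2*(b1*x 3 + x 4) - 2*b2*x 1*x 3 = 0"
    and "2*x 1*(b1*x 3 + x 4) - 2*w*b2*x 2*x 3 = 0"
    and "2*b1*x 1*x 2 - b2*(x 1^2 + w*x 2^2) + 3*A*x 3^2 + 2*B*x 3*x 4 + C*x 4^2 = 0"
    and "2*x 1*x 2 + B*x 3^2 + 2*C*x 3*x 4 + 3*D*x 4^2 = 0"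
proof -
  note coeff = point_mult_ge_coeff_eq_0[OF assms surfaceF_along_line]
  show "surfaceF w b1 b2 A B C D x = 0"
    using coeff[of 0] by simp
  show "2*x 2*(b1*x 3 + x 4) - 2*b2*x 1*x 3 = 0"
    using coeff[of 1 "\<lambda>i. if i = 1 then 1 else 0"] by (simp add: algebra_simps)
  show "2*x 1*(b1*x 3 + x 4) - 2*w*b2*x 2*x 3 = 0"
    using coeff[of 1 "\<lambda>i. if i = 2 then 1 else 0"] by (simp add: algebra_simps)
  show "2*b1*x 1*x 2 - b2*(x 1^2 + w*x 2^2) + 3*A*x 3^2 + 2*B*x 3*x 4 + C*x 4^2 = 0"
    using coeff[of 1 "\<lambda>i. if i = 3 then 1 else 0"] by (simp add: algebra_simps)
  show "2*x 1*x 2 + B*x 3^2 + 2*C*x 3*x 4 + 3*D*x 4^2 = 0"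
    using coeff[of 1 "\<lambda>i. if i = 4 then 1 else 0"] by (simp add: algebra_simps)
qed

lemma surfaceF_eq:
  "surfaceF w b1 b2 A B C D x
    = 2*x 1*x 2*(b1*x 3 + x 4) - (x 1^2 + w*x 2^2)*(b2*x 3) + binary_cubic A B C D (x 3) (x 4)"
  by (simp add: surfaceF_def binary_cubic_def)

lemma det2_eq_0_if_nonzero_kernel:
  fixes a b c d p q :: "'b::idom"
  assumes "a*p + b*q = 0" and "c*p + d*q = 0" and "p \<noteq> 0 \<or> q \<noteq> 0"
  shows "a*d - b*c = 0"
proof -
  have "p*(a*d - b*c) = d*(a*p + b*q) - b*(c*p + d*q)"
    and "q*(a*d - b*c) = a*(c*p + d*q) - c*(a*p + b*q)"
    by (simp_all add: algebra_simps)
  with assms show ?thesis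
    by auto
qed

lemma surfaceF_critical_point_t_eq_0:
  fixes w b1 b2 A B C D x1 x2 x3 x4 :: "'b::field"
  assumes two: "(2::'b) \<noteq> 0" and w: "w \<noteq> 0" and b2: "b2 \<noteq> 0"
    and g_nz: "\<And>\<delta>. \<delta>^2 = w \<Longrightarrow> binary_cubic A B C D 1 (\<delta>*b2 - b1) \<noteq> 0"
    and S: "2*x1*x2*(b1*x3 + x4) - (x1^2 + w*x2^2)*(b2*x3) + binary_cubic A B C D x3 x4 = 0"
    and S1: "2*x2*(b1*x3 + x4) - 2*b2*x1*x3 = 0"
    and S2: "2*x1*(b1*x3 + x4) - 2*w*b2*x2*x3 = 0"
    and S3: "2*b1*x1*x2 - b2*(x1^2 + w*x2^2) + 3*A*x3^2 + 2*B*x3*x4 + C*x4^2 = 0"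
    and S4: "2*x1*x2 + B*x3^2 + 2*C*x3*x4 + 3*D*x4^2 = 0"
  shows "x1 = 0 \<and> x2 = 0"
proof (rule ccontr)
  assume t_nz: "\<not> (x1 = 0 \<and> x2 = 0)"
  define L where "L = b1*x3 + x4"
  have "2*(x2*L - b2*x1*x3) = 0" and "2*(x1*L - w*b2*x2*x3) = 0"
    using S1 S2 by (simp_all add: L_def algebra_simps)
  with two have L1: "x2*L = b2*x1*x3" and L2: "x1*L = w*b2*x2*x3"
    by simp_all
  have "L*x2 + (- b2*x3)*x1 = 0" and "(- w*b2*x3)*x2 + L*x1 = 0"
    using L1 L2 by (simp_all add: algebra_simps)
  from det2_eq_0_if_nonzero_kernel[OF this] t_nz have LL: "L^2 = w*b2^2*x3^2"
    by (auto simp: algebra_simps power2_eq_square)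
  show False
  proof (cases "x3 = 0")
    case True
    with LL have "x4 = 0"
      by (simp add: L_def)
    with True S4 two have "x1 = 0 \<or> x2 = 0"
      by simp
    with True \<open>x4 = 0\<close> S3 b2 w t_nz show False
      by auto
  next
    case False
    define \<delta> where "\<delta> = L / (b2*x3)"
    have L\<delta>: "L = \<delta>*b2*x3"
      using False b2 by (simp add: \<delta>_def)
    with LL False b2 have \<delta>_sq: "\<delta>^2 = w"
      by (simp add: power_mult_distrib)
    have x4: "x4 = (\<delta>*b2 - b1)*x3"
      using L\<delta> by (simp add: L_def algebra_simps)
    have x1: "x1 = \<delta>*x2"
      using L1 L\<delta> False b2 by (simp add: algebra_simps)
    have "2*x1*x2*(b1*x3 + x4) - (x1^2 + w*x2^2)*(b2*x3) = 0"
      unfolding x1 L_def[symmetric] L\<delta> \<delta>_sq[symmetric] by (simp add: algebra_simps power2_eq_square)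
    with S have "x3^3 * binary_cubic A B C D 1 (\<delta>*b2 - b1) = 0"
      by (simp add: binary_cubic_def x4 algebra_simps power2_eq_square power3_eq_cube)
    with g_nz[OF \<delta>_sq] False show False
      by simp
  qed
qed

lemma surfaceF_not_triple_point:
  fixes w b1 b2 A B C D :: "'b::field" and x :: "4 \<Rightarrow> 'b"
  assumes "infinite (UNIV :: 'b set)" and "(2::'b) \<noteq> 0" and "b2 \<noteq> 0"
    and "x 1 = 0" and "x 2 = 0" and "x 3 \<noteq> 0 \<or> x 4 \<noteq> 0"
  shows "\<not> point_mult_ge (surfaceF w b1 b2 A B C D) x 3"
proof
  assume "point_mult_ge (surfaceF w b1 b2 A B C D) x 3"
  note coeff = point_mult_ge_coeff_eq_0[OF assms(1) this surfaceF_along_line]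
  have "b2 * x 3 = 0"
    using coeff[of 2 "\<lambda>i. if i = 1 then 1 else 0"] assms(4,5) by (simp add: numeral_2_eq_2)
  moreover have "2 * x 4 = 0" if "x 3 = 0"
    using coeff[of 2 "\<lambda>i. if i = 1 \<or> i = 2 then 1 else 0"] assms(4,5) that
    by (simp add: numeral_2_eq_2)
  ultimately show False
    using assms(2,3,6) by auto
qed

lemma surfaceF_singular_point:
  fixes w b1 b2 A B C D :: "'b::field" and P :: "4 \<Rightarrow> 'b"
  assumes inf: "infinite (UNIV :: 'b set)" and two: "(2::'b) \<noteq> 0" and "w \<noteq> 0" and b2: "b2 \<noteq> 0"
    and "\<And>\<delta>. \<delta>^2 = w \<Longrightarrow> binary_cubic A B C D 1 (\<delta>*b2 - b1) \<noteq> 0"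
    and sing: "singular_point (surfaceF w b1 b2 A B C D) P"
  shows "P 1 = 0 \<and> P 2 = 0 \<and> cubic_multiple_root A B C D (P 3) (P 4)
    \<and> double_point (surfaceF w b1 b2 A B C D) P"
proof -
  have P_nz: "P \<noteq> (\<lambda>_. 0)" and m2: "point_mult_ge (surfaceF w b1 b2 A B C D) P 2"
    using sing by (simp_all add: singular_point_def)
  note grad = surfaceF_singular_gradient[OF inf m2, unfolded surfaceF_eq]
  have t: "P 1 = 0 \<and> P 2 = 0"
    by (rule surfaceF_critical_point_t_eq_0[OF two assms(3,4,5) grad])
  with P_nz have XZ: "P 3 \<noteq> 0 \<or> P 4 \<noteq> 0"
    by (metis exhaust_4)
  with t grad have "cubic_multiple_root A B C D (P 3) (P 4)"
    by (simp add: cubic_multiple_root_def)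
  moreover have "double_point (surfaceF w b1 b2 A B C D) P"
    using surfaceF_not_triple_point[OF inf two b2] t XZ P_nz m2 by (simp add: double_point_def)
  ultimately show ?thesis
    using t by simp
qed

lemma binary_cubic_conic_discriminant:
  fixes a1 a2 b1 b2 c1 c2 e1 e2 \<epsilon> :: "'b::comm_ring_1"
  shows "binary_cubic (a1*b2 - a2*b1) (b2*c1 - b1*c2 - a2) (b2*e1 - b1*e2 - c2) (- e2) 1 (- \<epsilon>*b2 - b1)
    = b2 * ((a1 + \<epsilon>*a2) + (e1 + \<epsilon>*e2)*(b1 + \<epsilon>*b2)^2 - (b1 + \<epsilon>*b2)*(c1 + \<epsilon>*c2))"
  by (simp add: binary_cubic_def algebra_simps power2_eq_square power3_eq_cube)

lemma conic_discriminant_split: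
  fixes a1 a2 b1 b2 c1 c2 e1 e2 \<epsilon> w :: "'b::comm_ring_1"
  assumes "\<epsilon>^2 = w"
  shows "(a1 + \<epsilon>*a2) + (e1 + \<epsilon>*e2)*(b1 + \<epsilon>*b2)^2 - (b1 + \<epsilon>*b2)*(c1 + \<epsilon>*c2)
    = (a1 + e1*(b1^2 + w*b2^2) + 2*w*e2*b1*b2 - b1*c1 - w*b2*c2)
      + \<epsilon>*(a2 + 2*e1*b1*b2 + e2*(b1^2 + w*b2^2) - b1*c2 - b2*c1)"
  unfolding assms[symmetric] by (simp add: algebra_simps power2_eq_square power3_eq_cube)

lemma to_ac_add_sqrt_eq_0_iff:
  fixes w x y :: "'a::field" and \<epsilon> :: "'a alg_closure"
  assumes "\<epsilon>^2 = to_ac w" and "\<not> (\<exists>s. s * s = w)"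
  shows "to_ac x + \<epsilon> * to_ac y = 0 \<longleftrightarrow> x = 0 \<and> y = 0"
proof
  assume h: "to_ac x + \<epsilon> * to_ac y = 0"
  show "x = 0 \<and> y = 0"
  proof (cases "y = 0")
    case False
    from h have "\<epsilon> * to_ac y = - to_ac x"
      by (metis add.commute eq_neg_iff_add_eq_0)
    with False have "\<epsilon> = to_ac (- x / y)"
      by (simp add: field_simps)
    with assms(1) have "to_ac w = to_ac ((- x / y) * (- x / y))"
      by (simp add: power2_eq_square)
    then have "(- x / y) * (- x / y) = w"
      by (simp only: to_ac_eq_iff)
    with assms(2) show ?thesis
      by blast
  qed (use h in simp)
qed simp

lemma binary_cubic_nonzero_if_conic_nonsingular:
  fixes w a1 a2 b1 b2 c1 c2 e1 e2 :: "'a::field" and \<epsilon> \<delta> :: "'a alg_closure"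
  assumes w_nonsq: "\<not> (\<exists>s. s * s = w)" and \<epsilon>_sq: "\<epsilon>^2 = to_ac w" and \<delta>_sq: "\<delta>^2 = to_ac w"
    and "b2 \<noteq> 0"
    and nonsing: "\<forall>P. \<not> singular_point
           (conicF (to_ac a1 + \<epsilon> * to_ac a2) (to_ac b1 + \<epsilon> * to_ac b2)
                   (to_ac c1 + \<epsilon> * to_ac c2) (to_ac e1 + \<epsilon> * to_ac e2)) P"
  shows "binary_cubic (to_ac (a1*b2 - a2*b1)) (to_ac (b2*c1 - b1*c2 - a2)) (to_ac (b2*e1 - b1*e2 - c2))
           (to_ac (- e2)) 1 (\<delta> * to_ac b2 - to_ac b1) \<noteq> 0"
proof -
  define x0 where "x0 = a1 + e1*(b1^2 + w*b2^2) + 2*w*e2*b1*b2 - b1*c1 - w*b2*c2"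
  define y0 where "y0 = a2 + 2*e1*b1*b2 + e2*(b1^2 + w*b2^2) - b1*c2 - b2*c1"
  have split: "(to_ac a1 + \<eta>*to_ac a2) + (to_ac e1 + \<eta>*to_ac e2)*(to_ac b1 + \<eta>*to_ac b2)^2
      - (to_ac b1 + \<eta>*to_ac b2)*(to_ac c1 + \<eta>*to_ac c2) = to_ac x0 + \<eta> * to_ac y0"
    if "\<eta>^2 = to_ac w" for \<eta>
    using conic_discriminant_split[OF that, of "to_ac a1" "to_ac a2" "to_ac e1" "to_ac e2"
        "to_ac b1" "to_ac b2" "to_ac c1" "to_ac c2"]
    by (simp add: x0_def y0_def)
  have "(to_ac a1 + \<epsilon>*to_ac a2) + (to_ac e1 + \<epsilon>*to_ac e2)*(to_ac b1 + \<epsilon>*to_ac b2)^2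
      - (to_ac b1 + \<epsilon>*to_ac b2)*(to_ac c1 + \<epsilon>*to_ac c2) \<noteq> 0"
    using nonsing conicF_singular_point[where a = "to_ac a1 + \<epsilon>*to_ac a2"
        and b = "to_ac b1 + \<epsilon>*to_ac b2" and c = "to_ac c1 + \<epsilon>*to_ac c2"
        and e = "to_ac e1 + \<epsilon>*to_ac e2"]
    by blast
  from this[unfolded split[OF \<epsilon>_sq]] have "\<not> (x0 = 0 \<and> y0 = 0)"
    by auto
  moreover have "(- \<delta>)^2 = to_ac w"
    using \<delta>_sq by simp
  ultimately have "to_ac x0 + (- \<delta>) * to_ac y0 \<noteq> 0"
    using to_ac_add_sqrt_eq_0_iff w_nonsq by blast
  moreover have "binary_cubic (to_ac (a1*b2 - a2*b1)) (to_ac (b2*c1 - b1*c2 - a2))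
      (to_ac (b2*e1 - b1*e2 - c2)) (to_ac (- e2)) 1 (\<delta> * to_ac b2 - to_ac b1)
      = to_ac b2 * (to_ac x0 + (- \<delta>) * to_ac y0)"
    using binary_cubic_conic_discriminant[of "to_ac a1" "to_ac b2" "to_ac a2" "to_ac b1"
        "to_ac c1" "to_ac c2" "to_ac e1" "to_ac e2" "- \<delta>"]
    unfolding split[OF \<open>(- \<delta>)^2 = to_ac w\<close>] by simp
  ultimately show ?thesis
    using \<open>b2 \<noteq> 0\<close> by simp
qed

lemma surfaceF_singular_point_on_cubic:
  fixes w a1 a2 b1 b2 c1 c2 e1 e2 :: "'a::field" and \<epsilon> :: "'a alg_closure" and P :: "4 \<Rightarrow> 'a alg_closure"
  assumes two: "(2::'a) \<noteq> 0" and w_nonsq: "\<not> (\<exists>s. s * s = w)" and \<epsilon>_sq: "\<epsilon>^2 = to_ac w"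
    and b2: "b2 \<noteq> 0"
    and nonsing: "\<forall>P. \<not> singular_point
           (conicF (to_ac a1 + \<epsilon> * to_ac a2) (to_ac b1 + \<epsilon> * to_ac b2)
                   (to_ac c1 + \<epsilon> * to_ac c2) (to_ac e1 + \<epsilon> * to_ac e2)) P"
  defines "S \<equiv> surfaceF (to_ac w) (to_ac b1) (to_ac b2) (to_ac (a1*b2 - a2*b1))
      (to_ac (b2*c1 - b1*c2 - a2)) (to_ac (b2*e1 - b1*e2 - c2)) (to_ac (- e2))"
  assumes sing: "singular_point S P"
  shows "P 1 = 0" and "P 2 = 0" and "double_point S P"
    and "cubic_multiple_root (to_ac (a1*b2 - a2*b1)) (to_ac (b2*c1 - b1*c2 - a2))
           (to_ac (b2*e1 - b1*e2 - c2)) (to_ac (- e2)) (P 3) (P 4)"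
proof -
  have "w \<noteq> 0"
    using w_nonsq mult_zero_left by metis
  with two b2 have "(2::'a alg_closure) \<noteq> 0" "to_ac w \<noteq> 0" "to_ac b2 \<noteq> 0"
    by simp_all
  from surfaceF_singular_point[OF infinite_UNIV_alg_closed_field this
      binary_cubic_nonzero_if_conic_nonsingular[OF w_nonsq \<epsilon>_sq _ b2 nonsing] sing[unfolded S_def]]
  show "P 1 = 0" "P 2 = 0" "double_point S P"
    and "cubic_multiple_root (to_ac (a1*b2 - a2*b1)) (to_ac (b2*c1 - b1*c2 - a2))
           (to_ac (b2*e1 - b1*e2 - c2)) (to_ac (- e2)) (P 3) (P 4)"
    unfolding S_def by blast+
qed

theorem mainTheorem6:
  fixes \<omega> a1 a2 b1 b2 c1 c2 e1 e2 :: "'a::{field,finite}"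
    and \<epsilon> :: "'a alg_closure"
  assumes q_odd: "odd CARD('a)"
    and \<omega>_nonsq: "\<not> (\<exists>x. x * x = \<omega>)"
    and \<epsilon>_sq: "\<epsilon> ^ 2 = to_ac \<omega>"
    and b2: "b2 \<noteq> 0"
    and conic_nonsing: "\<forall>P. \<not> singular_point
           (conicF (to_ac a1 + \<epsilon> * to_ac a2) (to_ac b1 + \<epsilon> * to_ac b2)
                   (to_ac c1 + \<epsilon> * to_ac c2) (to_ac e1 + \<epsilon> * to_ac e2)) P"
  defines "S \<equiv> surfaceF (to_ac \<omega>) (to_ac b1) (to_ac b2)
      (to_ac (- a2 * b1 + a1 * b2))
      (to_ac (b2 * c1 - b1 * c2 - a2 * 1 + a1 * 0))
      (to_ac (- c2 * 1 + c1 * 0 + b2 * e1 - b1 * e2))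
      (to_ac (0 * e1 - 1 * e2))"
  shows "(\<forall>P Q. singular_point S P \<and> singular_point S Q \<longrightarrow> proj_eq P Q)
       \<and> (\<forall>P. singular_point S P \<longrightarrow>
             double_point S P \<and> (\<exists>c. \<exists>p :: 4 \<Rightarrow> 'a. P = (\<lambda>i. c * to_ac (p i))))"
proof -
  define A B C D where "A = a1*b2 - a2*b1" and "B = b2*c1 - b1*c2 - a2"
    and "C = b2*e1 - b1*e2 - c2" and "D = - e2"
  have two: "(2::'a) \<noteq> 0"
    using q_odd by (rule odd_card_imp_two_neq_zero)
  have S_eq: "S = surfaceF (to_ac \<omega>) (to_ac b1) (to_ac b2) (to_ac A) (to_ac B) (to_ac C) (to_ac D)"
    by (simp add: S_def A_def B_def C_def D_def algebra_simps)
  note sing = surfaceF_singular_point_on_cubic[OF two \<omega>_nonsq \<epsilon>_sq b2 conic_nonsing,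
      folded A_def B_def C_def D_def, folded S_eq]
  have "binary_cubic (to_ac A) (to_ac B) (to_ac C) (to_ac D) 1 (\<epsilon> * to_ac b2 - to_ac b1) \<noteq> 0"
    unfolding A_def B_def C_def D_def
    by (rule binary_cubic_nonzero_if_conic_nonsingular[OF \<omega>_nonsq \<epsilon>_sq \<epsilon>_sq b2 conic_nonsing])
  then have coeffs_nz: "\<not> (A = 0 \<and> B = 0 \<and> C = 0 \<and> D = 0)"
    by (auto simp: binary_cubic_def)
  show ?thesis
  proof (intro conjI allI impI, elim conjE)
    fix P Q
    assume P: "singular_point S P" and Q: "singular_point S Q"
    from two coeffs_nz have "(2::'a alg_closure) \<noteq> 0"
      and "\<not> (to_ac A = 0 \<and> to_ac B = 0 \<and> to_ac C = 0 \<and> to_ac D = 0)"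
      by simp_all
    from cubic_multiple_root_unique[OF this sing(4)[OF P] sing(4)[OF Q]] sing(1,2)[OF P] sing(1,2)[OF Q]
    show "proj_eq P Q"
      unfolding proj_eq_def by (auto simp: fun_eq_iff forall_4)
  next
    fix P
    assume P: "singular_point S P"
    then show "double_point S P"
      by (rule sing(3))
    obtain c s3 s4 where "P 3 = c * to_ac s3" and "P 4 = c * to_ac s4"
      using cubic_multiple_root_rational[OF two coeffs_nz sing(4)[OF P]] by blast
    with sing(1,2)[OF P] have "P = (\<lambda>i. c * to_ac (if i = 3 then s3 else if i = 4 then s4 else 0))"
      by (simp add: fun_eq_iff forall_4)
    then show "\<exists>c. \<exists>p :: 4 \<Rightarrow> 'a. P = (\<lambda>i. c * to_ac (p i))"
      by (intro exI[of _ c] exI[of _ "\<lambda>i. if i = 3 then s3 else if i = 4 then s4 else 0"])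
  qed
qed

end
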